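(* Let $G(T)$ be the graph inverse semigroup of the unary tree $T$, endowed with a Hausdorff topology making it a semitopological semigroup. If there exists $k\in\omega$ such that $0$ is not an accumulation point of the set $L_k^*$, then $0$ is not an accumulation point of $L_n^*$ for every $n\in\omega$.
   Context: A semitopological semigroup is a space with separately continuous associative multiplication. The unary tree $T$ has vertex set $\omega$ and edges $(n,n+1)$ with source $n$ and range $n+1$. For $k\le p$, $(k,p)$ denotes the unique path from vertex $k$ to vertex $p$ (with $(n,n)$ the vertex $n$). The graph inverse semigroup $G(T)$ is the semigroup with zero $0$ generated by the vertices, the edges and formal inverses $e^{-1}$ of the edges subject to: for vertices $a,b$: $ab=a$ if $a=b$, else $0$; for edges $e,f$: $s(e)e=er(e)=e$, $e^{-1}s(e)=r(e)e^{-1}=e^{-1}$, $e^{-1}f=r(e)$ if $e=f$, else $0$. Each non-zero element is uniquely $uv^{-1}$ with paths $u,v$ having the same range. For $n\in\omega$, $L_n=\{(n,m)(n,m)^{-1}\mid m\ge n\}\cup\{0\}$ and $L_n^*=L_n\setminus\{0\}$. *)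

theory Defs
  imports "HOL-Analysis.Analysis"
begin

text \<open>A non-zero element u v^-1 with u = (a,p), v = (b,p) (paths in T with common range p)
  is encoded as Some (a, b, p) with a \<le> p, b \<le> p; the zero 0 is None.\<close>

type_synonym git = "(nat \<times> nat \<times> nat) option"

definition git_carrier :: "git set" where
  "git_carrier = {None} \<union> {Some (a, b, p) | a b p. a \<le> p \<and> b \<le> p}"

fun git_mult :: "git \<Rightarrow> git \<Rightarrow> git" where
  "git_mult None y = None"
| "git_mult (Some x) None = None"
| "git_mult (Some (a, b, p)) (Some (c, d, q)) =
     (if b = c then Some (a, d, max p q) else None)"

text \<open>The element (n,m)(n,m)^-1 is Some (n,n,m). L_n^* = L_n minus 0.\<close>
definition Lstar :: "nat \<Rightarrow> git set" where
  "Lstar n = {Some (n, n, m) | m. n \<le> m}"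

definition semitopological_git :: "git topology \<Rightarrow> bool" where
  "semitopological_git X \<longleftrightarrow> topspace X = git_carrier \<and>
     (\<forall>x\<in>git_carrier. continuous_map X X (\<lambda>y. git_mult x y) \<and>
                      continuous_map X X (\<lambda>y. git_mult y x))"

end

theory Submission
  imports Defs
begin

text \<open>For \<open>p \<ge> n, k\<close> the two-sided translation \<open>y \<mapsto> (k,p)(n,p)\<^sup>-\<^sup>1 y (n,p)(k,p)\<^sup>-\<^sup>1\<close>
  is continuous, fixes \<open>0\<close> and maps \<open>L\<^sub>n\<^sup>*\<close> into \<open>L\<^sub>k\<^sup>*\<close>. Hence the preimage of a
  neighbourhood of \<open>0\<close> missing \<open>L\<^sub>k\<^sup>*\<close> is a neighbourhood of \<open>0\<close> missing \<open>L\<^sub>n\<^sup>*\<close>.\<close>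

lemma continuous_map_in_derived_set_of:
  assumes "continuous_map X Y f"
    and "f ` (S - {x}) \<subseteq> T - {f x}"
    and "x \<in> X derived_set_of S"
  shows "f x \<in> Y derived_set_of T"
  unfolding in_derived_set_of
proof (intro conjI allI impI)
  have x: "x \<in> topspace X" using assms(3) by (simp add: in_derived_set_of)
  then show "f x \<in> topspace Y" using continuous_map_image_subset_topspace[OF assms(1)] by blast
  fix V assume V: "f x \<in> V \<and> openin Y V"
  let ?U = "{z \<in> topspace X. f z \<in> V}"
  have "openin X ?U" using openin_continuous_map_preimage[OF assms(1)] V by blast
  moreover have "x \<in> ?U" using x V by blast
  ultimately obtain z where "z \<noteq> x" "z \<in> S" "z \<in> ?U"
    using assms(3) unfolding in_derived_set_of by meson
  then show "\<exists>w\<noteq>f x. w \<in> T \<and> w \<in> V" using assms(2) by blast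
qed

lemma continuous_map_git_two_sided_translation:
  assumes "semitopological_git X" "a \<in> git_carrier" "b \<in> git_carrier"
  shows "continuous_map X X (\<lambda>y. git_mult (git_mult a y) b)"
proof -
  have "continuous_map X X (\<lambda>y. git_mult a y)" "continuous_map X X (\<lambda>y. git_mult y b)"
    using assms unfolding semitopological_git_def by blast+
  from continuous_map_compose[OF this] show ?thesis by (simp add: o_def)
qed

lemma git_two_sided_translation_Lstar:
  assumes "y \<in> Lstar n" "n \<le> p" "k \<le> p"
  shows "git_mult (git_mult (Some (k, n, p)) y) (Some (n, k, p)) \<in> Lstar k"
  using assms unfolding Lstar_def by auto

theorem lemma4p5:
  fixes X :: "git topology"
  assumes "semitopological_git X"
    and "Hausdorff_space X"
    and "\<exists>k. None \<notin> X derived_set_of (Lstar k)"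
  shows "\<forall>n. None \<notin> X derived_set_of (Lstar n)"
proof
  fix n
  obtain k where k: "None \<notin> X derived_set_of (Lstar k)" using assms(3) by blast
  define p where "p = max n k"
  define f where "f = (\<lambda>y. git_mult (git_mult (Some (k, n, p)) y) (Some (n, k, p)))"
  have cont: "continuous_map X X f"
    unfolding f_def using assms(1)
    by (rule continuous_map_git_two_sided_translation) (simp_all add: git_carrier_def p_def)
  have "f y \<in> Lstar k" if "y \<in> Lstar n" for y
    unfolding f_def using that by (rule git_two_sided_translation_Lstar) (simp_all add: p_def)
  moreover have "None \<notin> Lstar k" and f_None: "f None = None"
    by (simp_all add: Lstar_def f_def)
  ultimately have "f ` (Lstar n - {None}) \<subseteq> Lstar k - {f None}" by auto
  with cont show "None \<notin> X derived_set_of (Lstar n)"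
    using continuous_map_in_derived_set_of k f_None by metis
qed

end
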